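(* Let $H\in(0,1)$, $d\geq2$ an integer and $T>0$. For $s,t,u,v\ge0$ set $\lambda=s^{2H}+t^{2H}$, $\rho=u^{2H}+v^{2H}$ and \[ \mu=\tfrac{1}{2}\left(s^{2H}+t^{2H}+u^{2H}+v^{2H}-|t-v|^{2H}-|s-u|^{2H}\right). \] Let \[ A_{T}=\int_{[0,T]^{4}}(\lambda\rho-\mu^{2})^{-d/2}\,ds\,dt\,du\,dv . \] Then $A_{T}<+\infty$ if and only if $Hd<2$.
   Context: Here $\lambda\rho-\mu^2\ge 0$ is the determinant of the covariance matrix of $(B^{1}_t-B^{2}_s,\,B^{1}_v-B^{2}_u)$ where $B^1,B^2$ are independent one-dimensional fractional Brownian motions with Hurst parameter $H$; the integrand is understood as $+\infty$ where this determinant vanishes. *)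

theory Defs
  imports "HOL-Analysis.Analysis"
begin

definition fbm_lambda :: "real \<Rightarrow> real \<Rightarrow> real \<Rightarrow> real" where
  "fbm_lambda H s t = s powr (2*H) + t powr (2*H)"

definition fbm_mu :: "real \<Rightarrow> real \<Rightarrow> real \<Rightarrow> real \<Rightarrow> real \<Rightarrow> real" where
  "fbm_mu H s t u v = (s powr (2*H) + t powr (2*H) + u powr (2*H) + v powr (2*H)
      - \<bar>t - v\<bar> powr (2*H) - \<bar>s - u\<bar> powr (2*H)) / 2"

definition fbm_det :: "real \<Rightarrow> real \<Rightarrow> real \<Rightarrow> real \<Rightarrow> real \<Rightarrow> real" where
  "fbm_det H s t u v = fbm_lambda H s t * fbm_lambda H u v - (fbm_mu H s t u v)\<^sup>2"

definition fbm_integrand :: "real \<Rightarrow> nat \<Rightarrow> real \<Rightarrow> real \<Rightarrow> real \<Rightarrow> real \<Rightarrow> ennreal" where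
  "fbm_integrand H d s t u v =
     (if fbm_det H s t u v = 0 then \<infinity> else ennreal (fbm_det H s t u v powr (- (real d / 2))))"

definition A_T :: "real \<Rightarrow> nat \<Rightarrow> real \<Rightarrow> ennreal" where
  "A_T H d T = (\<integral>\<^sup>+ (s, t, u, v) \<in> {0..T} \<times> {0..T} \<times> {0..T} \<times> {0..T}.
       fbm_integrand H d s t u v \<partial>lborel)"

end

theory Submission
  imports Defs
begin

text \<open>The covariance matrix of \<open>(B\<^sup>1\<^sub>t - B\<^sup>2\<^sub>s, B\<^sup>1\<^sub>v - B\<^sup>2\<^sub>u)\<close> is the sum of the covariance
  matrices of \<open>(B\<^sup>1\<^sub>t, B\<^sup>1\<^sub>v)\<close> and \<open>(B\<^sup>2\<^sub>s, B\<^sup>2\<^sub>u)\<close>, and the determinant is superadditive on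
  positive semidefinite 2x2 matrices, so \<open>\<lambda>\<rho> - \<mu>\<^sup>2 \<ge> D(t,v) + D(s,u)\<close>, where \<open>D(x,y)\<close> is the
  determinant for a single fBm. Heron's formula and the concavity of \<open>x \<mapsto> x\<^sup>H\<close> give
  \<open>D(x,y) \<ge> c (x min(y, |x-y|))\<^sup>2\<^sup>H\<close>, and AM-GM turns the sum into a product. The integrand is
  therefore dominated by a product of one-dimensional singularities of order \<open>Hd/2\<close> at the
  coordinate hyperplanes and the diagonals, all integrable when \<open>Hd < 2\<close>.

  Conversely \<open>\<lambda>\<rho> - \<mu>\<^sup>2 \<le> \<lambda> (|t-v|\<^sup>2\<^sup>H + |s-u|\<^sup>2\<^sup>H)\<close>, so on the wedge \<open>|t-v| \<le> u-s\<close> the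
  integrand is at least \<open>c (u-s)\<^sup>-\<^sup>H\<^sup>d \<ge> c' (u-s)\<^sup>-\<^sup>2\<close> when \<open>Hd \<ge> 2\<close>. Integrating \<open>v\<close> over an
  interval of length \<open>u-s\<close> leaves \<open>(u-s)\<^sup>-\<^sup>1\<close>, which is not integrable at \<open>u = s\<close>.\<close>

lemma one_plus_powr_le:
  fixes H x :: real
  assumes "0 \<le> H" "H \<le> 1" "0 \<le> x"
  shows "(1 + x) powr H \<le> 1 + H * x"
  using Youngs_inequality_0[of H "1 - H" "1 + x" 1] assms by (simp add: algebra_simps)

lemma powr_add_le:
  fixes H v w :: real
  assumes H: "0 \<le> H" "H \<le> 1" and v: "0 < v" "v \<le> w"
  shows "(v + w) powr H \<le> w powr H + H * v powr H"
proof -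
  have w: "w > 0" using v by linarith
  have "v + w = w * (1 + v / w)"
    using w by (simp add: field_simps)
  then have "(v + w) powr H = w powr H * (1 + v / w) powr H"
    using v w by (simp add: powr_mult)
  also have "\<dots> \<le> w powr H * (1 + H * (v / w))"
    using one_plus_powr_le[OF H, of "v / w"] v w by (intro mult_left_mono) auto
  also have "\<dots> = w powr H + H * v * w powr (H - 1)"
    using w by (simp add: powr_diff field_simps)
  also have "\<dots> \<le> w powr H + H * v * v powr (H - 1)"
    using v H by (intro add_left_mono mult_left_mono powr_mono2') auto
  also have "H * v * v powr (H - 1) = H * v powr H"
    using v by (simp add: powr_diff)
  finally show ?thesis .
qed

lemma powr_add_le_sub_min:
  fixes H v w :: real
  assumes H: "0 < H" "H \<le> 1" and "0 \<le> v" "0 \<le> w"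
  shows "(v + w) powr H \<le> v powr H + w powr H - (1 - H) * min (v powr H) (w powr H)"
proof -
  have *: "(x + y) powr H \<le> x powr H + y powr H - (1 - H) * min (x powr H) (y powr H)"
    if "0 \<le> x" "x \<le> y" for x y :: real
  proof (cases "x = 0")
    case False
    with that have "(x + y) powr H \<le> y powr H + H * x powr H"
      by (intro powr_add_le) (use H in auto)
    moreover have "min (x powr H) (y powr H) = x powr H"
      using that H by (simp add: powr_mono2)
    ultimately show ?thesis by (simp add: algebra_simps)
  qed (use H in simp)
  show ?thesis
    using *[of v w] *[of w v] assms by (cases "v \<le> w") (auto simp: add.commute min.commute)
qed

lemma powr_double_eq_square: "0 \<le> (x::real) \<Longrightarrow> x powr (2 * H) = (x powr H)\<^sup>2"
  by (simp add: power2_eq_square powr_add[symmetric])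

lemma triangle_product_lower:
  fixes a b c k :: real
  assumes "0 \<le> a" "0 \<le> b" "a \<le> c" "b \<le> c" "0 \<le> k" "k * min a b \<le> a + b - c"
  shows "k * (a * b)\<^sup>2 \<le> (a + b - c) * (a + c - b) * (c + b - a) * (a + b + c)"
proof -
  have "0 \<le> k * min a b"
    using assms by simp
  then have "0 \<le> a + b - c"
    using assms(6) by linarith
  then have "(k * min a b) * a * b * max a b \<le> (a + b - c) * (a + c - b) * (c + b - a) * (a + b + c)"
    using assms by (intro mult_mono mult_nonneg_nonneg) (auto simp: max_def)
  moreover have "min a b * max a b = a * b"
    by (simp add: min_def max_def)
  ultimately show ?thesis
    by (simp add: power2_eq_square mult_ac)
qed

lemma det2_superadditive:
  fixes a1 c1 r1 a2 c2 r2 :: real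
  assumes "0 \<le> a1" "0 \<le> c1" "0 \<le> a2" "0 \<le> c2" "r1\<^sup>2 \<le> a1 * c1" "r2\<^sup>2 \<le> a2 * c2"
  shows "(a1 * c1 - r1\<^sup>2) + (a2 * c2 - r2\<^sup>2) \<le> (a1 + a2) * (c1 + c2) - (r1 + r2)\<^sup>2"
proof -
  have "(r1 * r2)\<^sup>2 \<le> (a1 * c2) * (a2 * c1)"
    using assms mult_mono[OF assms(5,6)] by (simp add: power_mult_distrib mult_ac)
  moreover have "(a1 * c2 + a2 * c1)\<^sup>2 = (a1 * c2 - a2 * c1)\<^sup>2 + 4 * ((a1 * c2) * (a2 * c1))"
    by algebra
  moreover have "(2 * (r1 * r2))\<^sup>2 = 4 * (r1 * r2)\<^sup>2"
    by algebra
  ultimately have "(2 * (r1 * r2))\<^sup>2 \<le> (a1 * c2 + a2 * c1)\<^sup>2"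
    using zero_le_power2[of "a1 * c2 - a2 * c1"] by linarith
  then have "2 * (r1 * r2) \<le> a1 * c2 + a2 * c1"
    by (rule power2_le_imp_le) (use assms in simp)
  then show ?thesis
    by (simp add: power2_eq_square algebra_simps)
qed

section \<open>Covariance determinants of fractional Brownian motion\<close>

definition fbm_cov :: "real \<Rightarrow> real \<Rightarrow> real \<Rightarrow> real" where
  "fbm_cov H x y = (x powr (2*H) + y powr (2*H) - \<bar>x - y\<bar> powr (2*H)) / 2"

text \<open>Determinant of the covariance matrix of \<open>(B\<^sub>x, B\<^sub>y)\<close> for a single fBm \<open>B\<close>.\<close>
definition fbm_cov_det :: "real \<Rightarrow> real \<Rightarrow> real \<Rightarrow> real" where
  "fbm_cov_det H x y = x powr (2*H) * y powr (2*H) - (fbm_cov H x y)\<^sup>2"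

lemma fbm_cov_det_commute: "fbm_cov_det H x y = fbm_cov_det H y x"
  unfolding fbm_cov_det_def fbm_cov_def by (simp add: abs_minus_commute algebra_simps)

text \<open>Heron's formula: the right-hand side is sixteen times the squared area of the triangle
  with sides \<open>a, b, c\<close>.\<close>
lemma fbm_cov_det_heron:
  fixes H x y :: real
  assumes "0 \<le> y" "y \<le> x"
  defines "a \<equiv> (x - y) powr H" and "b \<equiv> y powr H" and "c \<equiv> x powr H"
  shows "4 * fbm_cov_det H x y = (a + b - c) * (a + c - b) * (c + b - a) * (a + b + c)"
proof -
  have "x powr (2*H) = c\<^sup>2" "y powr (2*H) = b\<^sup>2" "\<bar>x - y\<bar> powr (2*H) = a\<^sup>2"
    using assms by (simp_all add: powr_double_eq_square)
  then show ?thesis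
    unfolding fbm_cov_det_def fbm_cov_def by (simp add: power2_eq_square field_simps)
qed

lemma fbm_cov_det_lower_ordered:
  fixes H x y :: real
  assumes H: "0 < H" "H \<le> 1" and y: "0 \<le> y" "y \<le> x"
  shows "(1 - H) * (y * (x - y)) powr (2*H) \<le> 4 * fbm_cov_det H x y"
proof -
  define a b c where "a = (x - y) powr H" and "b = y powr H" and "c = x powr H"
  have "c \<le> a + b - (1 - H) * min a b"
    using powr_add_le_sub_min[OF H, of "x - y" y] y by (simp add: a_def b_def c_def)
  moreover have "a \<le> c" "b \<le> c"
    using y H by (auto simp: a_def b_def c_def intro: powr_mono2)
  ultimately have "(1 - H) * (a * b)\<^sup>2 \<le> 4 * fbm_cov_det H x y"
    unfolding fbm_cov_det_heron[OF y] a_def b_def c_def using H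
    by (intro triangle_product_lower) auto
  moreover have "(y * (x - y)) powr (2*H) = ((y * (x - y)) powr H)\<^sup>2"
    using y by (intro powr_double_eq_square) simp
  moreover have "(y * (x - y)) powr H = a * b"
    using y by (simp add: a_def b_def powr_mult mult.commute)
  ultimately show ?thesis by simp
qed

lemma fbm_cov_det_lower:
  fixes H x y :: real
  assumes H: "0 < H" "H \<le> 1" and "0 \<le> x" "0 \<le> y"
  shows "(1 - H) * (x * min y \<bar>x - y\<bar> / 2) powr (2*H) \<le> 4 * fbm_cov_det H x y"
proof -
  have le: "x * min y \<bar>x - y\<bar> / 2 \<le> min x y * \<bar>x - y\<bar>"
  proof (cases "y \<le> x")
    case True
    have "x * min y (x - y) \<le> 2 * (y * (x - y))"
    proof (cases "y \<le> x - y")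
      case True
      then have "0 \<le> y * (x - 2 * y)" using \<open>0 \<le> y\<close> by simp
      then show ?thesis using True by (simp add: min_def algebra_simps)
    next
      case False
      then have "0 \<le> (x - y) * (2 * y - x)" using \<open>y \<le> x\<close> by simp
      then show ?thesis using False by (simp add: min_def algebra_simps)
    qed
    moreover have "min x y = y" "\<bar>x - y\<bar> = x - y"
      using True by auto
    ultimately show ?thesis by simp
  next
    case False
    then show ?thesis using assms by (auto simp: min_def intro: mult_left_mono)
  qed
  have "(1 - H) * (x * min y \<bar>x - y\<bar> / 2) powr (2*H) \<le> (1 - H) * (min x y * \<bar>x - y\<bar>) powr (2*H)"
    using le assms by (intro mult_left_mono powr_mono2) auto
  also have "\<dots> \<le> 4 * fbm_cov_det H x y"
  proof (cases "y \<le> x")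
    case True
    then have "min x y * \<bar>x - y\<bar> = y * (x - y)"
      by simp
    then show ?thesis using fbm_cov_det_lower_ordered[OF H \<open>0 \<le> y\<close> True] by simp
  next
    case False
    then show ?thesis
      using fbm_cov_det_lower_ordered[OF H \<open>0 \<le> x\<close>, of y] fbm_cov_det_commute[of H x y]
      by (simp add: min_def abs_minus_commute mult.commute)
  qed
  finally show ?thesis .
qed

lemma fbm_cov_det_nonneg:
  assumes "0 < H" "H \<le> 1" "0 \<le> x" "0 \<le> y"
  shows "0 \<le> fbm_cov_det H x y"
proof -
  have "0 \<le> (1 - H) * (x * min y \<bar>x - y\<bar> / 2) powr (2*H)"
    using assms by simp
  then show ?thesis
    using fbm_cov_det_lower[OF assms] by linarith
qed

lemma fbm_mu_eq_cov: "fbm_mu H s t u v = fbm_cov H s u + fbm_cov H t v"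
  unfolding fbm_mu_def fbm_cov_def by (simp add: field_simps)

lemma fbm_cov_det_add_le_fbm_det:
  assumes "0 < H" "H \<le> 1" "0 \<le> s" "0 \<le> t" "0 \<le> u" "0 \<le> v"
  shows "fbm_cov_det H s u + fbm_cov_det H t v \<le> fbm_det H s t u v"
  using det2_superadditive[of "s powr (2*H)" "u powr (2*H)" "t powr (2*H)" "v powr (2*H)"
      "fbm_cov H s u" "fbm_cov H t v"]
    fbm_cov_det_nonneg[OF assms(1,2,3,5)] fbm_cov_det_nonneg[OF assms(1,2,4,6)]
  unfolding fbm_det_def fbm_lambda_def fbm_mu_eq_cov fbm_cov_det_def by simp

lemma fbm_det_nonneg:
  assumes "0 < H" "H \<le> 1" "0 \<le> s" "0 \<le> t" "0 \<le> u" "0 \<le> v"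
  shows "0 \<le> fbm_det H s t u v"
  using fbm_cov_det_add_le_fbm_det[OF assms] fbm_cov_det_nonneg[OF assms(1-3,5)]
    fbm_cov_det_nonneg[OF assms(1,2,4,6)] by linarith

lemma fbm_det_le:
  "fbm_det H s t u v \<le> fbm_lambda H s t * (\<bar>t - v\<bar> powr (2*H) + \<bar>s - u\<bar> powr (2*H))"
proof -
  define L R M where "L = fbm_lambda H s t" and "R = fbm_lambda H u v" and "M = fbm_mu H s t u v"
  have "\<bar>t - v\<bar> powr (2*H) + \<bar>s - u\<bar> powr (2*H) = L + R - 2 * M"
    unfolding L_def R_def M_def fbm_lambda_def fbm_mu_def by (simp add: field_simps)
  moreover have "L * R - M\<^sup>2 \<le> L * (L + R - 2 * M)"
    using zero_le_power2[of "L - M"] by (simp add: power2_eq_square algebra_simps)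
  ultimately show ?thesis
    unfolding fbm_det_def L_def R_def M_def by simp
qed

lemma fbm_det_lower:
  fixes H s t u v :: real
  assumes H: "0 < H" "H \<le> 1" and nonneg: "0 \<le> s" "0 \<le> t" "0 \<le> u" "0 \<le> v"
  shows "(1 - H) / 2 * (s * min u \<bar>s - u\<bar> * (t * min v \<bar>t - v\<bar>) / 4) powr H \<le> fbm_det H s t u v"
proof -
  define p q where "p = s * min u \<bar>s - u\<bar> / 2" and "q = t * min v \<bar>t - v\<bar> / 2"
  define X Y where "X = p powr H" and "Y = q powr H"
  have pq: "0 \<le> p" "0 \<le> q"
    using nonneg by (simp_all add: p_def q_def)
  have XY: "(s * min u \<bar>s - u\<bar> * (t * min v \<bar>t - v\<bar>) / 4) powr H = X * Y"
  proof -
    have "s * min u \<bar>s - u\<bar> * (t * min v \<bar>t - v\<bar>) / 4 = p * q"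
      by (simp add: p_def q_def)
    then show ?thesis
      using pq by (simp add: X_def Y_def powr_mult)
  qed
  have "(1 - H) * X\<^sup>2 \<le> 4 * fbm_cov_det H s u" "(1 - H) * Y\<^sup>2 \<le> 4 * fbm_cov_det H t v"
    using fbm_cov_det_lower[OF H, of s u] fbm_cov_det_lower[OF H, of t v] nonneg pq
    by (simp_all add: X_def Y_def p_def q_def powr_double_eq_square)
  moreover have "(1 - H) * (2 * (X * Y)) \<le> (1 - H) * X\<^sup>2 + (1 - H) * Y\<^sup>2"
  proof -
    have "2 * (X * Y) \<le> X\<^sup>2 + Y\<^sup>2"
      using zero_le_power2[of "X - Y"] by (simp add: power2_eq_square algebra_simps)
    then show ?thesis
      using H mult_left_mono[of "2 * (X * Y)" "X\<^sup>2 + Y\<^sup>2" "1 - H"] by (simp add: distrib_left)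
  qed
  moreover have "(1 - H) / 2 * (X * Y) = (1 - H) * (2 * (X * Y)) / 4"
    by simp
  ultimately have "(1 - H) / 2 * (X * Y) \<le> fbm_cov_det H s u + fbm_cov_det H t v"
    by linarith
  also have "\<dots> \<le> fbm_det H s t u v"
    by (rule fbm_cov_det_add_le_fbm_det[OF H nonneg])
  finally show ?thesis
    unfolding XY .
qed

lemma fbm_det_le_near_diagonal:
  fixes H T s t u v :: real
  assumes "0 < H" "s \<in> {0..T}" "t \<in> {0..T}" "s \<le> u" "\<bar>t - v\<bar> \<le> u - s"
  shows "fbm_det H s t u v \<le> 4 * T powr (2*H) * (u - s) powr (2*H)"
proof -
  have "fbm_det H s t u v \<le> fbm_lambda H s t * (\<bar>t - v\<bar> powr (2*H) + \<bar>s - u\<bar> powr (2*H))"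
    by (rule fbm_det_le)
  also have "\<dots> \<le> (2 * T powr (2*H)) * (2 * (u - s) powr (2*H))"
  proof (rule mult_mono)
    have "s powr (2*H) \<le> T powr (2*H)" "t powr (2*H) \<le> T powr (2*H)"
      using assms by (auto intro: powr_mono2)
    then show "fbm_lambda H s t \<le> 2 * T powr (2*H)"
      unfolding fbm_lambda_def by simp
    have "\<bar>t - v\<bar> powr (2*H) \<le> (u - s) powr (2*H)"
      using assms by (intro powr_mono2) auto
    then show "\<bar>t - v\<bar> powr (2*H) + \<bar>s - u\<bar> powr (2*H) \<le> 2 * (u - s) powr (2*H)"
      using assms by (simp add: abs_minus_commute)
  qed (simp_all add: fbm_lambda_def)
  finally show ?thesis
    by simp
qed

section \<open>Pointwise bounds on the integrand\<close>

text \<open>\<open>x\<^sup>-\<^sup>a\<close>, extended by \<open>\<infinity>\<close> to \<open>x \<le> 0\<close> so that bounds by it also hold where some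
  coordinate or some difference of coordinates vanishes.\<close>
definition sing_powr :: "real \<Rightarrow> real \<Rightarrow> ennreal" where
  "sing_powr a x = (if x \<le> 0 then \<infinity> else ennreal (x powr - a))"

lemma sing_powr_pos: "0 < sing_powr a x"
  by (simp add: sing_powr_def)

lemma sing_powr_measurable [measurable]: "sing_powr a \<in> borel_measurable borel"
  unfolding sing_powr_def by measurable

lemma sing_powr_mult:
  assumes "0 \<le> x" "0 \<le> y"
  shows "sing_powr a (x * y) = sing_powr a x * sing_powr a y"
proof (cases "x = 0 \<or> y = 0")
  case True
  then show ?thesis
    using sing_powr_pos[of a x] sing_powr_pos[of a y] by (auto simp: sing_powr_def ennreal_mult_top ennreal_top_mult)
next
  case False
  with assms have "0 < x" "0 < y"
    by auto
  then show ?thesis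
    by (simp add: sing_powr_def powr_mult ennreal_mult mult_le_0_iff)
qed

lemma sing_powr_min_le:
  assumes "0 \<le> a"
  shows "sing_powr a (min x y) \<le> sing_powr a x + sing_powr a y"
  using assms by (cases "x \<le> y") (auto simp: sing_powr_def min_def)

lemma fbm_integrand_le_sing_powr:
  fixes H s t u v :: real and d :: nat
  assumes H: "0 < H" "H < 1" and nonneg: "0 \<le> s" "0 \<le> t" "0 \<le> u" "0 \<le> v"
  shows "fbm_integrand H d s t u v \<le> ennreal (((1 - H) / 2) powr (- (real d / 2))) *
           sing_powr (H * real d / 2) (s * min u \<bar>s - u\<bar> * (t * min v \<bar>t - v\<bar>) / 4)"
proof -
  define q where "q = s * min u \<bar>s - u\<bar> * (t * min v \<bar>t - v\<bar>) / 4"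
  define c where "c = (1 - H) / 2"
  have c: "0 < c"
    using H by (simp add: c_def)
  show ?thesis
  proof (cases "q \<le> 0")
    case True
    then show ?thesis
      using c by (simp add: q_def[symmetric] c_def[symmetric] sing_powr_def ennreal_mult_top)
  next
    case False
    have "c * q powr H \<le> fbm_det H s t u v"
      using fbm_det_lower[OF H(1) _ nonneg] H by (simp add: c_def q_def)
    moreover have qH: "0 < c * q powr H"
      using c False by simp
    ultimately have "fbm_det H s t u v powr (- (real d / 2)) \<le> (c * q powr H) powr (- (real d / 2))"
      by (intro powr_mono2') auto
    also have "\<dots> = c powr (- (real d / 2)) * q powr (- (H * real d / 2))"
      by (simp add: powr_mult powr_powr)
    finally show ?thesis
      using False qH \<open>c * q powr H \<le> _\<close>
      by (simp add: fbm_integrand_def sing_powr_def q_def[symmetric] c_def[symmetric] ennreal_mult[symmetric] ennreal_leI)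
  qed
qed

lemma fbm_integrand_le_product:
  fixes H :: real and d :: nat
  assumes H: "0 < H" "H < 1"
  defines "a \<equiv> H * real d / 2"
  obtains K where "K < \<infinity>" and
    "\<And>s t u v. 0 \<le> s \<Longrightarrow> 0 \<le> t \<Longrightarrow> 0 \<le> u \<Longrightarrow> 0 \<le> v \<Longrightarrow>
       fbm_integrand H d s t u v \<le>
         K * ((sing_powr a s * (sing_powr a u + sing_powr a \<bar>s - u\<bar>)) *
              (sing_powr a t * (sing_powr a v + sing_powr a \<bar>t - v\<bar>)))"
proof
  define K where "K = ennreal (((1 - H) / 2) powr (- (real d / 2))) * sing_powr a (1 / 4)"
  show "K < \<infinity>"
    by (simp add: K_def sing_powr_def ennreal_mult_less_top)
  fix s t u v :: real
  assume nonneg: "0 \<le> s" "0 \<le> t" "0 \<le> u" "0 \<le> v"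
  have a: "0 \<le> a"
    using H by (simp add: a_def)
  have "sing_powr a (s * min u \<bar>s - u\<bar> * (t * min v \<bar>t - v\<bar>) / 4) =
      sing_powr a (1 / 4) * ((sing_powr a s * sing_powr a (min u \<bar>s - u\<bar>)) *
        (sing_powr a t * sing_powr a (min v \<bar>t - v\<bar>)))"
    using nonneg by (simp add: sing_powr_mult[symmetric] mult_ac)
  also have "\<dots> \<le> sing_powr a (1 / 4) * ((sing_powr a s * (sing_powr a u + sing_powr a \<bar>s - u\<bar>)) *
        (sing_powr a t * (sing_powr a v + sing_powr a \<bar>t - v\<bar>)))"
    using sing_powr_min_le[OF a] by (intro mult_left_mono mult_mono) auto
  finally have "ennreal (((1 - H) / 2) powr (- (real d / 2))) * sing_powr a (s * min u \<bar>s - u\<bar> * (t * min v \<bar>t - v\<bar>) / 4)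
      \<le> K * ((sing_powr a s * (sing_powr a u + sing_powr a \<bar>s - u\<bar>)) *
           (sing_powr a t * (sing_powr a v + sing_powr a \<bar>t - v\<bar>)))"
    unfolding K_def mult.assoc by (rule mult_left_mono) simp
  with fbm_integrand_le_sing_powr[OF H nonneg, of d]
  show "fbm_integrand H d s t u v \<le>
      K * ((sing_powr a s * (sing_powr a u + sing_powr a \<bar>s - u\<bar>)) *
           (sing_powr a t * (sing_powr a v + sing_powr a \<bar>t - v\<bar>)))"
    unfolding a_def by (rule order_trans)
qed

lemma fbm_integrand_lower_near_diagonal:
  fixes H T :: real and d :: nat
  assumes H: "0 < H" "H < 1" and Hd: "2 \<le> H * real d" and T: "0 < T"
  obtains c where "0 < c" and
    "\<And>s t u v. s \<in> {0..T} \<Longrightarrow> t \<in> {0..T} \<Longrightarrow> 0 < u - s \<Longrightarrow> u - s \<le> T \<Longrightarrow> 0 \<le> v \<Longrightarrow>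
       \<bar>t - v\<bar> \<le> u - s \<Longrightarrow> ennreal (c / (u - s)\<^sup>2) \<le> fbm_integrand H d s t u v"
proof
  define K where "K = 4 * T powr (2*H)"
  show "0 < K powr (- (real d / 2)) * T powr (2 - H * real d)"
    using T by (simp add: K_def)
  fix s t u v
  assume st: "s \<in> {0..T}" "t \<in> {0..T}" and y: "0 < u - s" "u - s \<le> T"
    and v: "0 \<le> v" "\<bar>t - v\<bar> \<le> u - s"
  show "ennreal (K powr (- (real d / 2)) * T powr (2 - H * real d) / (u - s)\<^sup>2) \<le> fbm_integrand H d s t u v"
  proof (cases "fbm_det H s t u v = 0")
    case False
    moreover have "0 \<le> fbm_det H s t u v"
      using st y v H by (intro fbm_det_nonneg) auto
    ultimately have pos: "0 < fbm_det H s t u v"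
      by simp
    \<comment> \<open>the exponent of u - s goes from -Hd down to -2, using u - s \<le> T and Hd \<ge> 2\<close>
    have "K powr (- (real d / 2)) * T powr (2 - H * real d) / (u - s)\<^sup>2
        \<le> K powr (- (real d / 2)) * (u - s) powr (2 - H * real d) / (u - s)\<^sup>2"
      using y Hd T by (intro divide_right_mono mult_left_mono powr_mono2') auto
    also have "\<dots> = (K * (u - s) powr (2*H)) powr (- (real d / 2))"
      using y by (simp add: powr_mult powr_powr powr_diff powr_minus_divide)
    also have "\<dots> \<le> fbm_det H s t u v powr (- (real d / 2))"
      using fbm_det_le_near_diagonal[of H s T t u v] st y v H pos
      by (intro powr_mono2') (auto simp: K_def)
    finally show ?thesis
      using False by (simp add: fbm_integrand_def ennreal_leI)
  qed (simp add: fbm_integrand_def)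
qed

section \<open>Integrals over the cube\<close>

lemma nn_integral_lborel_pair:
  fixes f :: "real \<times> 'b::euclidean_space \<Rightarrow> ennreal"
  assumes "f \<in> borel_measurable borel"
  shows "(\<integral>\<^sup>+x. f x \<partial>lborel) = (\<integral>\<^sup>+a. \<integral>\<^sup>+b. f (a, b) \<partial>lborel \<partial>lborel)"
  using assms lborel.nn_integral_fst[of f lborel] by (simp add: lborel_prod borel_prod)

lemma nn_integral_lborel_4:
  fixes f :: "real \<times> real \<times> real \<times> real \<Rightarrow> ennreal"
  assumes "f \<in> borel_measurable (borel \<Otimes>\<^sub>M borel \<Otimes>\<^sub>M borel \<Otimes>\<^sub>M borel)"
  shows "(\<integral>\<^sup>+x. f x \<partial>lborel) =
    (\<integral>\<^sup>+s. \<integral>\<^sup>+t. \<integral>\<^sup>+u. \<integral>\<^sup>+v. f (s, t, u, v) \<partial>lborel \<partial>lborel \<partial>lborel \<partial>lborel)"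
proof -
  have [measurable]: "f \<in> borel_measurable borel"
    using assms by (simp add: borel_prod)
  show ?thesis
    by (simp add: nn_integral_lborel_pair borel_prod)
qed

lemma nn_integral_pair_product:
  fixes F :: "real \<Rightarrow> real \<Rightarrow> ennreal"
  assumes [measurable]: "case_prod F \<in> borel_measurable (borel \<Otimes>\<^sub>M borel)"
  shows "(\<integral>\<^sup>+(s, t, u, v). c * (F s u * F t v) \<partial>lborel) = c * (\<integral>\<^sup>+s. \<integral>\<^sup>+u. F s u \<partial>lborel \<partial>lborel)\<^sup>2"
proof -
  have "(\<lambda>(s, t, u, v). c * (F s u * F t v)) \<in> borel_measurable (borel \<Otimes>\<^sub>M borel \<Otimes>\<^sub>M borel \<Otimes>\<^sub>M borel)"
    by measurable
  then have "(\<integral>\<^sup>+(s, t, u, v). c * (F s u * F t v) \<partial>lborel) =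
      (\<integral>\<^sup>+s. \<integral>\<^sup>+t. \<integral>\<^sup>+u. c * F s u * (\<integral>\<^sup>+v. F t v \<partial>lborel) \<partial>lborel \<partial>lborel \<partial>lborel)"
    by (simp add: nn_integral_lborel_4 nn_integral_cmult mult.assoc)
  also have "\<dots> = (\<integral>\<^sup>+s. \<integral>\<^sup>+t. c * (\<integral>\<^sup>+u. F s u \<partial>lborel) * (\<integral>\<^sup>+v. F t v \<partial>lborel) \<partial>lborel \<partial>lborel)"
    by (simp add: nn_integral_cmult nn_integral_multc)
  also have "\<dots> = c * (\<integral>\<^sup>+s. \<integral>\<^sup>+u. F s u \<partial>lborel \<partial>lborel) * (\<integral>\<^sup>+t. \<integral>\<^sup>+v. F t v \<partial>lborel \<partial>lborel)"
    by (simp add: nn_integral_cmult nn_integral_multc)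
  finally show ?thesis
    by (simp add: power2_eq_square mult.assoc)
qed

lemma nn_integral_sing_powr_interval:
  fixes a T :: real
  assumes "a < 1" "0 \<le> T"
  shows "(\<integral>\<^sup>+x. indicator {0..T} x * sing_powr a x \<partial>lborel) = ennreal (T powr (1 - a) / (1 - a))"
proof -
  have "(\<integral>\<^sup>+x. indicator {0..T} x * sing_powr a x \<partial>lborel) =
      (\<integral>\<^sup>+x. ennreal (indicator {0..T} x * x powr (- a)) \<partial>lborel)"
    by (intro nn_integral_cong_AE eventually_mono[OF AE_lborel_singleton[of 0]])
      (auto simp: sing_powr_def indicator_def)
  also have "\<dots> = ennreal (T powr (- a + 1) / (- a + 1))"
    using has_integral_powr_from_0[of "- a" T] assms by (intro nn_integral_has_integral_lebesgue) auto
  finally show ?thesis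
    by simp
qed

lemma nn_integral_sing_powr_dist_le:
  fixes a T x :: real
  assumes "x \<in> {0..T}"
  shows "(\<integral>\<^sup>+y. indicator {0..T} y * sing_powr a \<bar>x - y\<bar> \<partial>lborel) \<le>
    2 * (\<integral>\<^sup>+y. indicator {0..T} y * sing_powr a y \<partial>lborel)"
proof -
  define f where "f w = indicator {0..T} w * sing_powr a w" for w :: real
  have [measurable]: "f \<in> borel_measurable borel"
    unfolding f_def by measurable
  have "(\<integral>\<^sup>+y. indicator {0..T} y * sing_powr a \<bar>x - y\<bar> \<partial>lborel) \<le>
      (\<integral>\<^sup>+y. f (x + (-1) * y) + f (- x + 1 * y) \<partial>lborel)"
    using assms by (intro nn_integral_mono) (auto simp: f_def indicator_def abs_if)
  also have "\<dots> = (\<integral>\<^sup>+y. f (x + (-1) * y) \<partial>lborel) + (\<integral>\<^sup>+y. f (- x + 1 * y) \<partial>lborel)"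
    by (intro nn_integral_add) auto
  also have "\<dots> = 2 * (\<integral>\<^sup>+y. f y \<partial>lborel)"
    using nn_integral_real_affine[of f "-1" x] nn_integral_real_affine[of f 1 "- x"]
    by (simp add: mult_2)
  finally show ?thesis
    by (simp add: f_def)
qed

lemma nn_integral_inverse_at_0:
  fixes c e :: real
  assumes c: "0 < c" and e: "0 < e"
  shows "(\<integral>\<^sup>+y. indicator {0<..e} y * ennreal (c / y) \<partial>lborel) = \<infinity>"
proof (rule ccontr)
  define I where "I = (\<integral>\<^sup>+y. indicator {0<..e} y * ennreal (c / y) \<partial>lborel)"
  have lower: "ennreal (c * (ln e - ln r)) \<le> I" if r: "0 < r" "r \<le> e" for r
  proof -
    have "((\<lambda>y. c * (1 / y)) has_integral (c * (ln e - ln r))) {r..e}"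
    proof (intro has_integral_mult_right fundamental_theorem_of_calculus)
      fix y assume "y \<in> {r..e}"
      with r have "0 < y" by auto
      then show "(ln has_vector_derivative 1 / y) (at y within {r..e})"
        by (auto intro!: derivative_eq_intros simp: has_real_derivative_iff_has_vector_derivative[symmetric])
    qed (use r in simp)
    then have "(\<integral>\<^sup>+y. ennreal (indicator {r..e} y * (c * (1 / y))) \<partial>lborel) = ennreal (c * (ln e - ln r))"
      using r c by (intro nn_integral_has_integral_lebesgue) auto
    moreover have "(\<integral>\<^sup>+y. ennreal (indicator {r..e} y * (c * (1 / y))) \<partial>lborel) \<le> I"
      unfolding I_def using r by (intro nn_integral_mono) (auto simp: indicator_def)
    ultimately show ?thesis
      by simp
  qed
  assume "I \<noteq> \<infinity>"
  then obtain M where M: "I = ennreal M" "0 \<le> M"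
    using ennreal_cases[of I] by auto
  define r where "r = e * exp (- (M / c) - 1)"
  \<comment> \<open>chosen so that c (ln e - ln r) = M + c exceeds I\<close>
  have "0 \<le> M / c"
    using M c by simp
  then have "exp (- (M / c) - 1) \<le> 1"
    by simp
  then have r: "0 < r" "r \<le> e"
    using e by (auto simp: r_def mult_le_cancel_left1)
  have "c * (ln e - ln r) = M + c"
    using e c by (simp add: r_def ln_mult field_simps)
  with lower[OF r] M c show False
    by simp
qed

lemma nn_integral_wedge_inverse_square:
  fixes c e :: real
  assumes c: "0 < c" and e: "0 < e"
  shows "(\<integral>\<^sup>+(s, t, u, v). indicator {0..e} s * indicator {0..e} t * indicator {0<..e} (u - s) *
      indicator {t..t + (u - s)} v * ennreal (c / (u - s)\<^sup>2) \<partial>lborel) = \<infinity>"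
    (is "(\<integral>\<^sup>+(s, t, u, v). ?L s t u v \<partial>lborel) = \<infinity>")
proof -
  have inner: "(\<integral>\<^sup>+v. ?L s t u v \<partial>lborel) =
      indicator {0..e} s * indicator {0..e} t * (indicator {0<..e} (- s + 1 * u) * ennreal (c / (- s + 1 * u)))"
    for s t u
  proof (cases "u - s \<in> {0<..e}")
    case True
    define k where "k = indicator {0..e} s * indicator {0..e} t * indicator {0<..e} (u - s) * ennreal (c / (u - s)\<^sup>2)"
    have "(\<integral>\<^sup>+v. ?L s t u v \<partial>lborel) = (\<integral>\<^sup>+v. k * indicator {t..t + (u - s)} v \<partial>lborel)"
      by (simp add: k_def mult_ac)
    also have "\<dots> = k * ennreal (u - s)"
      using True by (simp add: nn_integral_cmult_indicator)
    also have "ennreal (c / (u - s)\<^sup>2) * ennreal (u - s) = ennreal (c / (u - s))"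
      using c True by (simp add: ennreal_mult[symmetric] power2_eq_square)
    ultimately show ?thesis
      using True by (simp add: k_def mult.assoc)
  next
    case False
    then have "indicator {0<..e} (u - s) = (0 :: ennreal)"
      by simp
    then show ?thesis
      by simp
  qed
  have outer: "(\<integral>\<^sup>+u. \<integral>\<^sup>+v. ?L s t u v \<partial>lborel \<partial>lborel) = (\<infinity> * indicator {0..e} s) * indicator {0..e} t"
    for s t
  proof -
    have "(\<integral>\<^sup>+u. \<integral>\<^sup>+v. ?L s t u v \<partial>lborel \<partial>lborel) = indicator {0..e} s * indicator {0..e} t *
        (\<integral>\<^sup>+u. indicator {0<..e} (- s + 1 * u) * ennreal (c / (- s + 1 * u)) \<partial>lborel)"
      unfolding inner by (rule nn_integral_cmult) measurable
    also have "(\<integral>\<^sup>+u. indicator {0<..e} (- s + 1 * u) * ennreal (c / (- s + 1 * u)) \<partial>lborel) = \<infinity>"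
      using nn_integral_real_affine[of "\<lambda>y. indicator {0<..e} y * ennreal (c / y)" 1 "- s"]
        nn_integral_inverse_at_0[OF c e] by simp
    finally show ?thesis
      by (simp add: mult_ac)
  qed
  have "(\<lambda>(s, t, u, v). ?L s t u v) \<in> borel_measurable (borel \<Otimes>\<^sub>M borel \<Otimes>\<^sub>M borel \<Otimes>\<^sub>M borel)"
    unfolding indicator_def atLeastAtMost_iff by measurable
  then have "(\<integral>\<^sup>+(s, t, u, v). ?L s t u v \<partial>lborel) =
      (\<integral>\<^sup>+s. \<integral>\<^sup>+t. (\<infinity> * indicator {0..e} s) * indicator {0..e} t \<partial>lborel \<partial>lborel)"
    by (simp only: nn_integral_lborel_4 case_prod_conv outer)
  also have "\<dots> = (\<integral>\<^sup>+s. \<infinity> * indicator {0..e} s \<partial>lborel)"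
  proof (rule nn_integral_cong)
    fix s :: real
    have "(\<integral>\<^sup>+t. (\<infinity> * indicator {0..e} s) * indicator {0..e} t \<partial>lborel) =
        (\<infinity> * indicator {0..e} s) * emeasure lborel {0..e}"
      by (rule nn_integral_cmult_indicator) simp
    also have "\<dots> = \<infinity> * indicator {0..e} s"
      using e by (simp add: ennreal_top_mult mult.commute[of _ "ennreal e"] flip: mult.assoc)
    finally show "(\<integral>\<^sup>+t. (\<infinity> * indicator {0..e} s) * indicator {0..e} t \<partial>lborel) =
        \<infinity> * indicator {0..e} s" .
  qed
  also have "\<dots> = \<infinity> * emeasure lborel {0..e}"
    by (rule nn_integral_cmult_indicator) simp
  also have "\<dots> = \<infinity>"
    using e by (simp add: ennreal_top_mult)
  finally show ?thesis .
qed

lemma A_T_finite: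
  fixes H T :: real and d :: nat
  assumes H: "0 < H" "H < 1" and Hd: "H * real d < 2" and T: "0 \<le> T"
  shows "A_T H d T < \<infinity>"
proof -
  define a where "a = H * real d / 2"
  obtain K where K: "K < \<infinity>" and bound: "\<And>s t u v. 0 \<le> s \<Longrightarrow> 0 \<le> t \<Longrightarrow> 0 \<le> u \<Longrightarrow> 0 \<le> v \<Longrightarrow>
       fbm_integrand H d s t u v \<le>
         K * ((sing_powr a s * (sing_powr a u + sing_powr a \<bar>s - u\<bar>)) *
              (sing_powr a t * (sing_powr a v + sing_powr a \<bar>t - v\<bar>)))"
    using fbm_integrand_le_product[OF H, of d] unfolding a_def by blast
  define g where "g x = indicator {0..T} x * sing_powr a x" for x
  define G where "G x y = g x * (g y + indicator {0..T} y * sing_powr a \<bar>x - y\<bar>)" for x y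
  define I where "I = (\<integral>\<^sup>+x. g x \<partial>lborel)"
  have I: "I < \<infinity>"
    using nn_integral_sing_powr_interval[of a T] H Hd T by (simp add: I_def g_def a_def)
  have row: "(\<integral>\<^sup>+y. G x y \<partial>lborel) \<le> g x * (I + 2 * I)" for x
  proof -
    have "(\<integral>\<^sup>+y. G x y \<partial>lborel) = g x * (I + (\<integral>\<^sup>+y. indicator {0..T} y * sing_powr a \<bar>x - y\<bar> \<partial>lborel))"
      by (simp add: G_def I_def g_def nn_integral_cmult nn_integral_add)
    also have "\<dots> \<le> g x * (I + 2 * I)"
    proof (cases "x \<in> {0..T}")
      case True
      then show ?thesis
        using nn_integral_sing_powr_dist_le[OF True, of a]
        by (intro mult_left_mono add_left_mono) (simp_all add: I_def g_def)
    qed (simp add: g_def)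
    finally show ?thesis .
  qed
  have "A_T H d T \<le> (\<integral>\<^sup>+(s, t, u, v). K * (G s u * G t v) \<partial>lborel)"
    unfolding A_T_def
    by (intro nn_integral_mono) (auto simp: G_def g_def indicator_def intro!: bound split: prod.splits)
  also have "\<dots> = K * (\<integral>\<^sup>+x. \<integral>\<^sup>+y. G x y \<partial>lborel \<partial>lborel)\<^sup>2"
    by (rule nn_integral_pair_product) (simp add: G_def g_def case_prod_beta, measurable)
  also have "\<dots> \<le> K * (I * (I + 2 * I))\<^sup>2"
  proof -
    have "(\<integral>\<^sup>+x. \<integral>\<^sup>+y. G x y \<partial>lborel \<partial>lborel) \<le> (\<integral>\<^sup>+x. g x * (I + 2 * I) \<partial>lborel)"
      by (intro nn_integral_mono row)
    also have "\<dots> = I * (I + 2 * I)"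
      unfolding I_def by (rule nn_integral_multc) (simp add: g_def)
    finally show ?thesis
      by (intro mult_left_mono power_mono) auto
  qed
  also have "\<dots> < \<infinity>"
    using K I by (simp add: ennreal_mult_less_top power_less_top_ennreal)
  finally show ?thesis .
qed

lemma A_T_infinite:
  fixes H T :: real and d :: nat
  assumes H: "0 < H" "H < 1" and Hd: "2 \<le> H * real d" and T: "0 < T"
  shows "A_T H d T = \<infinity>"
proof -
  obtain c where c: "0 < c" and bound: "\<And>s t u v. s \<in> {0..T} \<Longrightarrow> t \<in> {0..T} \<Longrightarrow> 0 < u - s \<Longrightarrow>
      u - s \<le> T \<Longrightarrow> 0 \<le> v \<Longrightarrow> \<bar>t - v\<bar> \<le> u - s \<Longrightarrow> ennreal (c / (u - s)\<^sup>2) \<le> fbm_integrand H d s t u v"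
    using fbm_integrand_lower_near_diagonal[OF H Hd T] by blast
  define e where "e = T / 2"
  have e: "0 < e" "e + e = T"
    using T by (simp_all add: e_def)
  have "\<infinity> = (\<integral>\<^sup>+(s, t, u, v). indicator {0..e} s * indicator {0..e} t * indicator {0<..e} (u - s) *
      indicator {t..t + (u - s)} v * ennreal (c / (u - s)\<^sup>2) \<partial>lborel)"
    using nn_integral_wedge_inverse_square[OF c e(1)] by simp
  also have "\<dots> \<le> A_T H d T"
    unfolding A_T_def
  proof (intro nn_integral_mono, clarify)
    fix s t u v :: real
    show "indicator {0..e} s * indicator {0..e} t * indicator {0<..e} (u - s) *
        indicator {t..t + (u - s)} v * ennreal (c / (u - s)\<^sup>2) \<le>
        fbm_integrand H d s t u v * indicator ({0..T} \<times> {0..T} \<times> {0..T} \<times> {0..T}) (s, t, u, v)"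
    proof (cases "s \<in> {0..e} \<and> t \<in> {0..e} \<and> u - s \<in> {0<..e} \<and> v \<in> {t..t + (u - s)}")
      case True
      then have "(s, t, u, v) \<in> {0..T} \<times> {0..T} \<times> {0..T} \<times> {0..T}"
        using e by auto
      moreover have "ennreal (c / (u - s)\<^sup>2) \<le> fbm_integrand H d s t u v"
        using True e by (intro bound) auto
      ultimately show ?thesis
        using True by simp
    qed (auto simp: indicator_def)
  qed
  finally show ?thesis
    by (simp add: top_unique)
qed

theorem lemma3p3:
  fixes H T :: real and d :: nat
  assumes "0 < H" "H < 1" "d \<ge> 2" "T > 0"
  shows "A_T H d T < \<infinity> \<longleftrightarrow> H * real d < 2"
  using A_T_finite[of H d T] A_T_infinite[of H d T] assms by (cases "H * real d < 2") auto

end
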